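(* Let $\mathcal B$ be a bicategory (a skew bicategory whose constraints $\alpha,\lambda,\rho$ are all invertible). Suppose given data $(D,T,K,v,k,v_0)$ on $\mathcal B$ as in the definition of a skew warping below, with all components of $v$, $k$ and $v_0$ invertible, satisfying axioms (W1) and (W2). Then axioms (W3), (W4) and (W5) also hold; that is, the data is a warping on $\mathcal B$.
   Context: Notation: for 1-cells $f\colon X\to Y$, $g\colon Y\to Z$ write $g\cdot f\colon X\to Z$ for their composite, $1$ or $1_X$ for identity 1-cells, and $\theta\cdot f$, $g\cdot\theta$ for whiskerings of 2-cells. A skew bicategory $\mathcal B$ consists of objects; hom-categories $\mathcal B(X,Y)$; composition functors $\mathcal B(Y,Z)\times\mathcal B(X,Y)\to\mathcal B(X,Z)$; identity 1-cells $1_X$; and natural (not necessarily invertible) 2-cells $\alpha_{f,g,h}\colon (h\cdot g)\cdot f\to h\cdot(g\cdot f)$, $\lambda_f\colon 1\cdot f\to f$, $\rho_f\colon f\to f\cdot 1$, subject to: (B1) $(k\cdot\alpha_{f,g,h})\circ\alpha_{f,h\cdot g,k}\circ(\alpha_{g,h,k}\cdot f)=\alpha_{g\cdot f,h,k}\circ\alpha_{f,g,k\cdot h}$; (B2) $(g\cdot\lambda_f)\circ\alpha_{f,1,g}\circ(\rho_g\cdot f)=1_{g\cdot f}$; (B3) $\lambda_{g\cdot f}\circ\alpha_{f,g,1}=\lambda_g\cdot f$; (B4) $\alpha_{1,f,g}\circ\rho_{g\cdot f}=g\cdot\rho_f$; (B5) $\lambda_1\circ\rho_1=1_{1}$. A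 skew warping on a skew bicategory $\mathcal B$ consists of: a function $D$ on objects; functors $T\colon\mathcal B(X,DY)\to\mathcal B(DX,DY)$; 1-cells $K=K_X\colon X\to DX$; natural 2-cells $v=v_{g,f}\colon T(Tg\cdot f)\to Tg\cdot Tf$ (for $f\colon X\to DY$, $g\colon Y\to DZ$), $k=k_f\colon f\to Tf\cdot K_X$ (for $f\colon X\to DY$), and 2-cells $v_0=v_{0,Y}\colon TK_Y\to 1_{DY}$, subject to the following axioms, for all $f\colon X\to DY$, $g\colon Y\to DZ$, $h\colon Z\to DW$: (W1) $\alpha\circ(v_{h,g}\cdot Tf)\circ v_{Th\cdot g,f}=(Th\cdot v_{g,f})\circ v_{h,Tg\cdot f}\circ T(\alpha)\circ T(v_{h,g}\cdot f)$ as 2-cells $T(T(Th\cdot g)\cdot f)\to Th\cdot(Tg\cdot Tf)$; (W2) $(Tf\cdot v_{0,X})\circ v_{f,K_X}\circ T(k_f)=\rho_{Tf}\colon Tf\to Tf\cdot 1$; (W3) $\lambda_{Tf}\circ(v_{0,Y}\cdot Tf)\circ v_{K_Y,f}=T(\lambda_f)\circ T(v_{0,Y}\cdot f)\colon T(TK_Y\cdot f)\to Tf$; (W4) $\alpha\circ(v_{g,f}\cdot K_X)\circ k_{Tg\cdot f}=Tg\cdot k_f\colon Tg\cdot f\to Tg\cdot(Tf\cdot K_X)$; (W5) $\lambda_{K_X}\circ(v_{0,X}\cdot K_X)\circ k_{K_X}=1_{K_X}$. A warping on a bicategory is a skew warping for which $v$, $k$, $v_0$ are invertible. *)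

theory Defs
  imports Main
begin

text \<open>VComp B psi phi is the vertical composite psi o phi (phi first);
  HComp1 B g f is the 1-cell composite g.f;
  HComp2 B psi phi is the horizontal composite of 2-cells (psi over g, phi over f);
  Alpha B f g h : (h.g).f --> h.(g.f);  Lam B f : 1.f --> f;  Rho B f : f --> f.1.\<close>

record ('o,'a,'c) bicat_data =
  Ob :: "'o set"
  Arr1 :: "'a set"
  Src :: "'a \<Rightarrow> 'o"
  Trg :: "'a \<Rightarrow> 'o"
  Arr2 :: "'c set"
  Dom :: "'c \<Rightarrow> 'a"
  Cod :: "'c \<Rightarrow> 'a"
  VComp :: "'c \<Rightarrow> 'c \<Rightarrow> 'c"
  Id2 :: "'a \<Rightarrow> 'c"
  HComp1 :: "'a \<Rightarrow> 'a \<Rightarrow> 'a"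
  HComp2 :: "'c \<Rightarrow> 'c \<Rightarrow> 'c"
  Id1 :: "'o \<Rightarrow> 'a"
  Alpha :: "'a \<Rightarrow> 'a \<Rightarrow> 'a \<Rightarrow> 'c"
  Lam :: "'a \<Rightarrow> 'c"
  Rho :: "'a \<Rightarrow> 'c"

definition hom1 :: "('o,'a,'c,'z) bicat_data_scheme \<Rightarrow> 'o \<Rightarrow> 'o \<Rightarrow> 'a set" where
  "hom1 B X Y = {f \<in> Arr1 B. Src B f = X \<and> Trg B f = Y}"

definition hom2 :: "('o,'a,'c,'z) bicat_data_scheme \<Rightarrow> 'a \<Rightarrow> 'a \<Rightarrow> 'c set" where
  "hom2 B f g = {\<phi> \<in> Arr2 B. Dom B \<phi> = f \<and> Cod B \<phi> = g}"

definition wl :: "('o,'a,'c,'z) bicat_data_scheme \<Rightarrow> 'c \<Rightarrow> 'a \<Rightarrow> 'c" where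
  "wl B \<theta> f = HComp2 B \<theta> (Id2 B f)"

definition wr :: "('o,'a,'c,'z) bicat_data_scheme \<Rightarrow> 'a \<Rightarrow> 'c \<Rightarrow> 'c" where
  "wr B g \<theta> = HComp2 B (Id2 B g) \<theta>"

definition invertible2 :: "('o,'a,'c,'z) bicat_data_scheme \<Rightarrow> 'c \<Rightarrow> bool" where
  "invertible2 B \<phi> \<longleftrightarrow> \<phi> \<in> Arr2 B \<and>
     (\<exists>\<psi> \<in> hom2 B (Cod B \<phi>) (Dom B \<phi>).
        VComp B \<psi> \<phi> = Id2 B (Dom B \<phi>) \<and> VComp B \<phi> \<psi> = Id2 B (Cod B \<phi>))"

definition skew_bicategory :: "('o,'a,'c,'z) bicat_data_scheme \<Rightarrow> bool" where
  "skew_bicategory B \<longleftrightarrow>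
    \<comment> \<open>1-cells have objects as source and target\<close>
    (\<forall>f \<in> Arr1 B. Src B f \<in> Ob B \<and> Trg B f \<in> Ob B) \<and>
    \<comment> \<open>hom-categories\<close>
    (\<forall>\<phi> \<in> Arr2 B. Dom B \<phi> \<in> Arr1 B \<and> Cod B \<phi> \<in> Arr1 B \<and>
        Src B (Dom B \<phi>) = Src B (Cod B \<phi>) \<and> Trg B (Dom B \<phi>) = Trg B (Cod B \<phi>)) \<and>
    (\<forall>f \<in> Arr1 B. Id2 B f \<in> hom2 B f f) \<and>
    (\<forall>f g h \<phi> \<psi>. \<phi> \<in> hom2 B f g \<longrightarrow> \<psi> \<in> hom2 B g h \<longrightarrow> VComp B \<psi> \<phi> \<in> hom2 B f h) \<and>
    (\<forall>f g h k \<phi> \<psi> \<chi>. \<phi> \<in> hom2 B f g \<longrightarrow> \<psi> \<in> hom2 B g h \<longrightarrow> \<chi> \<in> hom2 B h k \<longrightarrow>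
        VComp B \<chi> (VComp B \<psi> \<phi>) = VComp B (VComp B \<chi> \<psi>) \<phi>) \<and>
    (\<forall>f g \<phi>. \<phi> \<in> hom2 B f g \<longrightarrow> VComp B (Id2 B g) \<phi> = \<phi> \<and> VComp B \<phi> (Id2 B f) = \<phi>) \<and>
    \<comment> \<open>composition functors\<close>
    (\<forall>X Y Z f g. f \<in> hom1 B X Y \<longrightarrow> g \<in> hom1 B Y Z \<longrightarrow> HComp1 B g f \<in> hom1 B X Z) \<and>
    (\<forall>\<phi> \<psi>. \<phi> \<in> Arr2 B \<longrightarrow> \<psi> \<in> Arr2 B \<longrightarrow> Trg B (Dom B \<phi>) = Src B (Dom B \<psi>) \<longrightarrow>
        HComp2 B \<psi> \<phi> \<in> hom2 B (HComp1 B (Dom B \<psi>) (Dom B \<phi>)) (HComp1 B (Cod B \<psi>) (Cod B \<phi>))) \<and>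
    (\<forall>f g. f \<in> Arr1 B \<longrightarrow> g \<in> Arr1 B \<longrightarrow> Trg B f = Src B g \<longrightarrow>
        HComp2 B (Id2 B g) (Id2 B f) = Id2 B (HComp1 B g f)) \<and>
    (\<forall>f f' f'' g g' g'' \<phi> \<phi>' \<psi> \<psi>'. \<phi> \<in> hom2 B f f' \<longrightarrow> \<phi>' \<in> hom2 B f' f'' \<longrightarrow>
        \<psi> \<in> hom2 B g g' \<longrightarrow> \<psi>' \<in> hom2 B g' g'' \<longrightarrow> Trg B f = Src B g \<longrightarrow>
        HComp2 B (VComp B \<psi>' \<psi>) (VComp B \<phi>' \<phi>) = VComp B (HComp2 B \<psi>' \<phi>') (HComp2 B \<psi> \<phi>)) \<and>
    \<comment> \<open>identity 1-cells\<close>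
    (\<forall>X \<in> Ob B. Id1 B X \<in> hom1 B X X) \<and>
    \<comment> \<open>constraint 2-cells and their naturality\<close>
    (\<forall>f g h. f \<in> Arr1 B \<longrightarrow> g \<in> Arr1 B \<longrightarrow> h \<in> Arr1 B \<longrightarrow> Trg B f = Src B g \<longrightarrow> Trg B g = Src B h \<longrightarrow>
        Alpha B f g h \<in> hom2 B (HComp1 B (HComp1 B h g) f) (HComp1 B h (HComp1 B g f))) \<and>
    (\<forall>f f' g g' h h' \<phi> \<psi> \<chi>. \<phi> \<in> hom2 B f f' \<longrightarrow> \<psi> \<in> hom2 B g g' \<longrightarrow> \<chi> \<in> hom2 B h h' \<longrightarrow>
        Trg B f = Src B g \<longrightarrow> Trg B g = Src B h \<longrightarrow>
        VComp B (Alpha B f' g' h') (HComp2 B (HComp2 B \<chi> \<psi>) \<phi>)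
          = VComp B (HComp2 B \<chi> (HComp2 B \<psi> \<phi>)) (Alpha B f g h)) \<and>
    (\<forall>f \<in> Arr1 B. Lam B f \<in> hom2 B (HComp1 B (Id1 B (Trg B f)) f) f) \<and>
    (\<forall>f f' \<phi>. \<phi> \<in> hom2 B f f' \<longrightarrow>
        VComp B \<phi> (Lam B f) = VComp B (Lam B f') (HComp2 B (Id2 B (Id1 B (Trg B f))) \<phi>)) \<and>
    (\<forall>f \<in> Arr1 B. Rho B f \<in> hom2 B f (HComp1 B f (Id1 B (Src B f)))) \<and>
    (\<forall>f f' \<phi>. \<phi> \<in> hom2 B f f' \<longrightarrow>
        VComp B (Rho B f') \<phi> = VComp B (HComp2 B \<phi> (Id2 B (Id1 B (Src B f)))) (Rho B f)) \<and>
    \<comment> \<open>(B1)\<close>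
    (\<forall>f g h k. f \<in> Arr1 B \<longrightarrow> g \<in> Arr1 B \<longrightarrow> h \<in> Arr1 B \<longrightarrow> k \<in> Arr1 B \<longrightarrow>
        Trg B f = Src B g \<longrightarrow> Trg B g = Src B h \<longrightarrow> Trg B h = Src B k \<longrightarrow>
        VComp B (wr B k (Alpha B f g h))
          (VComp B (Alpha B f (HComp1 B h g) k) (wl B (Alpha B g h k) f))
        = VComp B (Alpha B (HComp1 B g f) h k) (Alpha B f g (HComp1 B k h))) \<and>
    \<comment> \<open>(B2)\<close>
    (\<forall>f g. f \<in> Arr1 B \<longrightarrow> g \<in> Arr1 B \<longrightarrow> Trg B f = Src B g \<longrightarrow>
        VComp B (wr B g (Lam B f))
          (VComp B (Alpha B f (Id1 B (Trg B f)) g) (wl B (Rho B g) f))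
        = Id2 B (HComp1 B g f)) \<and>
    \<comment> \<open>(B3)\<close>
    (\<forall>f g. f \<in> Arr1 B \<longrightarrow> g \<in> Arr1 B \<longrightarrow> Trg B f = Src B g \<longrightarrow>
        VComp B (Lam B (HComp1 B g f)) (Alpha B f g (Id1 B (Trg B g))) = wl B (Lam B g) f) \<and>
    \<comment> \<open>(B4)\<close>
    (\<forall>f g. f \<in> Arr1 B \<longrightarrow> g \<in> Arr1 B \<longrightarrow> Trg B f = Src B g \<longrightarrow>
        VComp B (Alpha B (Id1 B (Src B f)) f g) (Rho B (HComp1 B g f)) = wr B g (Rho B f)) \<and>
    \<comment> \<open>(B5)\<close>
    (\<forall>X \<in> Ob B. VComp B (Lam B (Id1 B X)) (Rho B (Id1 B X)) = Id2 B (Id1 B X))"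

definition bicategory :: "('o,'a,'c,'z) bicat_data_scheme \<Rightarrow> bool" where
  "bicategory B \<longleftrightarrow> skew_bicategory B \<and>
    (\<forall>f g h. f \<in> Arr1 B \<longrightarrow> g \<in> Arr1 B \<longrightarrow> h \<in> Arr1 B \<longrightarrow> Trg B f = Src B g \<longrightarrow> Trg B g = Src B h \<longrightarrow>
        invertible2 B (Alpha B f g h)) \<and>
    (\<forall>f \<in> Arr1 B. invertible2 B (Lam B f) \<and> invertible2 B (Rho B f))"

text \<open>The functor T : B(X,DY) --> B(DX,DY) is indexed by the pair (X,Y):
  WT W X Y on 1-cells, WT2 W X Y on 2-cells.
  For f : X --> DY and g : Y --> DZ, v_{g,f} = Wv W X Y Z g f.\<close>

record ('o,'a,'c) warp_data =
  WD :: "'o \<Rightarrow> 'o"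
  WT :: "'o \<Rightarrow> 'o \<Rightarrow> 'a \<Rightarrow> 'a"
  WT2 :: "'o \<Rightarrow> 'o \<Rightarrow> 'c \<Rightarrow> 'c"
  WK :: "'o \<Rightarrow> 'a"
  Wv :: "'o \<Rightarrow> 'o \<Rightarrow> 'o \<Rightarrow> 'a \<Rightarrow> 'a \<Rightarrow> 'c"
  Wk :: "'o \<Rightarrow> 'o \<Rightarrow> 'a \<Rightarrow> 'c"
  Wv0 :: "'o \<Rightarrow> 'c"

definition warping_data ::
  "('o,'a,'c,'z) bicat_data_scheme \<Rightarrow> ('o,'a,'c,'w) warp_data_scheme \<Rightarrow> bool" where
  "warping_data B W \<longleftrightarrow>
    (\<forall>X \<in> Ob B. WD W X \<in> Ob B) \<and>
    (\<forall>X \<in> Ob B. \<forall>Y \<in> Ob B. \<forall>f \<in> hom1 B X (WD W Y). WT W X Y f \<in> hom1 B (WD W X) (WD W Y)) \<and>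
    (\<forall>X \<in> Ob B. \<forall>Y \<in> Ob B. \<forall>f g \<phi>. f \<in> hom1 B X (WD W Y) \<longrightarrow> \<phi> \<in> hom2 B f g \<longrightarrow>
        WT2 W X Y \<phi> \<in> hom2 B (WT W X Y f) (WT W X Y g)) \<and>
    (\<forall>X \<in> Ob B. \<forall>Y \<in> Ob B. \<forall>f \<in> hom1 B X (WD W Y). WT2 W X Y (Id2 B f) = Id2 B (WT W X Y f)) \<and>
    (\<forall>X \<in> Ob B. \<forall>Y \<in> Ob B. \<forall>f g h \<phi> \<psi>. f \<in> hom1 B X (WD W Y) \<longrightarrow> \<phi> \<in> hom2 B f g \<longrightarrow>
        \<psi> \<in> hom2 B g h \<longrightarrow> WT2 W X Y (VComp B \<psi> \<phi>) = VComp B (WT2 W X Y \<psi>) (WT2 W X Y \<phi>)) \<and>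
    (\<forall>X \<in> Ob B. WK W X \<in> hom1 B X (WD W X)) \<and>
    (\<forall>X \<in> Ob B. \<forall>Y \<in> Ob B. \<forall>Z \<in> Ob B. \<forall>f \<in> hom1 B X (WD W Y). \<forall>g \<in> hom1 B Y (WD W Z).
        Wv W X Y Z g f \<in> hom2 B (WT W X Z (HComp1 B (WT W Y Z g) f))
                                 (HComp1 B (WT W Y Z g) (WT W X Y f))) \<and>
    (\<forall>X \<in> Ob B. \<forall>Y \<in> Ob B. \<forall>Z \<in> Ob B. \<forall>f f' g g' \<phi> \<psi>.
        f \<in> hom1 B X (WD W Y) \<longrightarrow> g \<in> hom1 B Y (WD W Z) \<longrightarrow> \<phi> \<in> hom2 B f f' \<longrightarrow> \<psi> \<in> hom2 B g g' \<longrightarrow>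
        VComp B (Wv W X Y Z g' f') (WT2 W X Z (HComp2 B (WT2 W Y Z \<psi>) \<phi>))
          = VComp B (HComp2 B (WT2 W Y Z \<psi>) (WT2 W X Y \<phi>)) (Wv W X Y Z g f)) \<and>
    (\<forall>X \<in> Ob B. \<forall>Y \<in> Ob B. \<forall>f \<in> hom1 B X (WD W Y).
        Wk W X Y f \<in> hom2 B f (HComp1 B (WT W X Y f) (WK W X))) \<and>
    (\<forall>X \<in> Ob B. \<forall>Y \<in> Ob B. \<forall>f f' \<phi>. f \<in> hom1 B X (WD W Y) \<longrightarrow> \<phi> \<in> hom2 B f f' \<longrightarrow>
        VComp B (Wk W X Y f') \<phi> = VComp B (wl B (WT2 W X Y \<phi>) (WK W X)) (Wk W X Y f)) \<and>
    (\<forall>Y \<in> Ob B. Wv0 W Y \<in> hom2 B (WT W Y Y (WK W Y)) (Id1 B (WD W Y)))"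

definition W1 :: "('o,'a,'c,'z) bicat_data_scheme \<Rightarrow> ('o,'a,'c,'w) warp_data_scheme \<Rightarrow> bool" where
  "W1 B W \<longleftrightarrow> (\<forall>X \<in> Ob B. \<forall>Y \<in> Ob B. \<forall>Z \<in> Ob B. \<forall>V \<in> Ob B.
     \<forall>f \<in> hom1 B X (WD W Y). \<forall>g \<in> hom1 B Y (WD W Z). \<forall>h \<in> hom1 B Z (WD W V).
     let T = WT W; T2 = WT2 W; v = Wv W; c = HComp1 B in
     VComp B (Alpha B (T X Y f) (T Y Z g) (T Z V h))
       (VComp B (wl B (v Y Z V h g) (T X Y f)) (v X Y V (c (T Z V h) g) f))
     = VComp B (wr B (T Z V h) (v X Y Z g f))
        (VComp B (v X Z V h (c (T Y Z g) f))
          (VComp B (T2 X V (Alpha B f (T Y Z g) (T Z V h)))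
             (T2 X V (wl B (v Y Z V h g) f)))))"

definition W2 :: "('o,'a,'c,'z) bicat_data_scheme \<Rightarrow> ('o,'a,'c,'w) warp_data_scheme \<Rightarrow> bool" where
  "W2 B W \<longleftrightarrow> (\<forall>X \<in> Ob B. \<forall>Y \<in> Ob B. \<forall>f \<in> hom1 B X (WD W Y).
     VComp B (wr B (WT W X Y f) (Wv0 W X))
       (VComp B (Wv W X X Y f (WK W X)) (WT2 W X Y (Wk W X Y f)))
     = Rho B (WT W X Y f))"

definition W3 :: "('o,'a,'c,'z) bicat_data_scheme \<Rightarrow> ('o,'a,'c,'w) warp_data_scheme \<Rightarrow> bool" where
  "W3 B W \<longleftrightarrow> (\<forall>X \<in> Ob B. \<forall>Y \<in> Ob B. \<forall>f \<in> hom1 B X (WD W Y).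
     VComp B (Lam B (WT W X Y f))
       (VComp B (wl B (Wv0 W Y) (WT W X Y f)) (Wv W X Y Y (WK W Y) f))
     = VComp B (WT2 W X Y (Lam B f)) (WT2 W X Y (wl B (Wv0 W Y) f)))"

definition W4 :: "('o,'a,'c,'z) bicat_data_scheme \<Rightarrow> ('o,'a,'c,'w) warp_data_scheme \<Rightarrow> bool" where
  "W4 B W \<longleftrightarrow> (\<forall>X \<in> Ob B. \<forall>Y \<in> Ob B. \<forall>Z \<in> Ob B.
     \<forall>f \<in> hom1 B X (WD W Y). \<forall>g \<in> hom1 B Y (WD W Z).
     VComp B (Alpha B (WK W X) (WT W X Y f) (WT W Y Z g))
       (VComp B (wl B (Wv W X Y Z g f) (WK W X)) (Wk W X Z (HComp1 B (WT W Y Z g) f)))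
     = wr B (WT W Y Z g) (Wk W X Y f))"

definition W5 :: "('o,'a,'c,'z) bicat_data_scheme \<Rightarrow> ('o,'a,'c,'w) warp_data_scheme \<Rightarrow> bool" where
  "W5 B W \<longleftrightarrow> (\<forall>X \<in> Ob B.
     VComp B (Lam B (WK W X)) (VComp B (wl B (Wv0 W X) (WK W X)) (Wk W X X (WK W X)))
     = Id2 B (WK W X))"

definition skew_warping ::
  "('o,'a,'c,'z) bicat_data_scheme \<Rightarrow> ('o,'a,'c,'w) warp_data_scheme \<Rightarrow> bool" where
  "skew_warping B W \<longleftrightarrow> warping_data B W \<and> W1 B W \<and> W2 B W \<and> W3 B W \<and> W4 B W \<and> W5 B W"

definition warping_invertible ::
  "('o,'a,'c,'z) bicat_data_scheme \<Rightarrow> ('o,'a,'c,'w) warp_data_scheme \<Rightarrow> bool" where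
  "warping_invertible B W \<longleftrightarrow>
    (\<forall>X \<in> Ob B. \<forall>Y \<in> Ob B. \<forall>Z \<in> Ob B. \<forall>f \<in> hom1 B X (WD W Y). \<forall>g \<in> hom1 B Y (WD W Z).
        invertible2 B (Wv W X Y Z g f)) \<and>
    (\<forall>X \<in> Ob B. \<forall>Y \<in> Ob B. \<forall>f \<in> hom1 B X (WD W Y). invertible2 B (Wk W X Y f)) \<and>
    (\<forall>Y \<in> Ob B. invertible2 B (Wv0 W Y))"

definition warping ::
  "('o,'a,'c,'z) bicat_data_scheme \<Rightarrow> ('o,'a,'c,'w) warp_data_scheme \<Rightarrow> bool" where
  "warping B W \<longleftrightarrow> bicategory B \<and> skew_warping B W \<and> warping_invertible B W"

end

theory Submission
  imports Defs
begin

text \<open>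
  Invertibility enters through two faithfulness principles:
  \<^item> each functor \<open>T\<close> is faithful, because \<open>k\<close> is an invertible natural transformation
    \<open>f \<Rightarrow> Tf\<cdot>K\<close> (lemma \<open>T_faithful\<close>);
  \<^item> whiskering with \<open>TK\<close> is faithful, because \<open>v\<^sub>0 : TK \<Rightarrow> 1\<close> and \<open>\<lambda>\<close> are invertible
    (lemma \<open>whisker_faithful\<close>).
  So each missing axiom is an equation that may be checked after applying \<open>T\<close>, or whiskering with
  \<open>TK\<close>, and composing with an invertible 2-cell; the transported equations follow from (W1), (W2),
  naturality, interchange and the coherence axioms (B2), (B4), (B5).
\<close>

section \<open>Skew bicategories\<close>

locale skew_bicat =
  fixes B :: "('o,'a,'c,'z) bicat_data_scheme"
  assumes skew_bicategory: "skew_bicategory B"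
begin

abbreviation vcomp :: "'c \<Rightarrow> 'c \<Rightarrow> 'c"  (infixr "\<bullet>" 55)
  where "\<psi> \<bullet> \<phi> \<equiv> VComp B \<psi> \<phi>"
abbreviation hcomp1 :: "'a \<Rightarrow> 'a \<Rightarrow> 'a"  (infixr "\<cdot>" 70)
  where "g \<cdot> f \<equiv> HComp1 B g f"
abbreviation hcomp2 :: "'c \<Rightarrow> 'c \<Rightarrow> 'c"  (infixr "\<star>" 65)
  where "\<psi> \<star> \<phi> \<equiv> HComp2 B \<psi> \<phi>"
abbreviation whisker_left :: "'a \<Rightarrow> 'c \<Rightarrow> 'c"  (infixr "\<triangleright>" 65)
  where "g \<triangleright> \<theta> \<equiv> HComp2 B (Id2 B g) \<theta>"
abbreviation whisker_right :: "'c \<Rightarrow> 'a \<Rightarrow> 'c"  (infixl "\<triangleleft>" 65)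
  where "\<theta> \<triangleleft> f \<equiv> HComp2 B \<theta> (Id2 B f)"

lemma arr1_ends: "f \<in> Arr1 B \<Longrightarrow> Src B f \<in> Ob B \<and> Trg B f \<in> Ob B"
  using skew_bicategory unfolding skew_bicategory_def by metis

lemma arr2_ends: "\<phi> \<in> Arr2 B \<Longrightarrow> Dom B \<phi> \<in> Arr1 B \<and> Cod B \<phi> \<in> Arr1 B \<and>
    Src B (Dom B \<phi>) = Src B (Cod B \<phi>) \<and> Trg B (Dom B \<phi>) = Trg B (Cod B \<phi>)"
  using skew_bicategory unfolding skew_bicategory_def by metis

lemma id2_hom: "f \<in> Arr1 B \<Longrightarrow> Id2 B f \<in> hom2 B f f"
  using skew_bicategory unfolding skew_bicategory_def by metis

lemma vcomp_hom: "\<lbrakk>\<phi> \<in> hom2 B f g; \<psi> \<in> hom2 B g h\<rbrakk> \<Longrightarrow> \<psi> \<bullet> \<phi> \<in> hom2 B f h"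
  using skew_bicategory unfolding skew_bicategory_def by metis

lemma vcomp_assoc_hom: "\<lbrakk>\<phi> \<in> hom2 B f g; \<psi> \<in> hom2 B g h; \<chi> \<in> hom2 B h k\<rbrakk>
   \<Longrightarrow> \<chi> \<bullet> \<psi> \<bullet> \<phi> = (\<chi> \<bullet> \<psi>) \<bullet> \<phi>"
  using skew_bicategory unfolding skew_bicategory_def by metis

lemma vcomp_unit_hom: "\<phi> \<in> hom2 B f g \<Longrightarrow> Id2 B g \<bullet> \<phi> = \<phi> \<and> \<phi> \<bullet> Id2 B f = \<phi>"
  using skew_bicategory unfolding skew_bicategory_def by metis

lemma hcomp1_hom: "\<lbrakk>f \<in> hom1 B X Y; g \<in> hom1 B Y Z\<rbrakk> \<Longrightarrow> g \<cdot> f \<in> hom1 B X Z"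
  using skew_bicategory unfolding skew_bicategory_def by metis

lemma hcomp2_hom: "\<lbrakk>\<phi> \<in> Arr2 B; \<psi> \<in> Arr2 B; Trg B (Dom B \<phi>) = Src B (Dom B \<psi>)\<rbrakk>
   \<Longrightarrow> \<psi> \<star> \<phi> \<in> hom2 B (Dom B \<psi> \<cdot> Dom B \<phi>) (Cod B \<psi> \<cdot> Cod B \<phi>)"
  using skew_bicategory unfolding skew_bicategory_def by metis

lemma hcomp2_id [simp]:
  "\<lbrakk>f \<in> Arr1 B; g \<in> Arr1 B; Trg B f = Src B g\<rbrakk> \<Longrightarrow> Id2 B g \<star> Id2 B f = Id2 B (g \<cdot> f)"
  using skew_bicategory unfolding skew_bicategory_def by metis

lemma id1_hom: "X \<in> Ob B \<Longrightarrow> Id1 B X \<in> hom1 B X X"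
  using skew_bicategory unfolding skew_bicategory_def by metis

lemma alpha_hom: "\<lbrakk>f \<in> Arr1 B; g \<in> Arr1 B; h \<in> Arr1 B; Trg B f = Src B g; Trg B g = Src B h\<rbrakk>
   \<Longrightarrow> Alpha B f g h \<in> hom2 B ((h \<cdot> g) \<cdot> f) (h \<cdot> g \<cdot> f)"
  using skew_bicategory unfolding skew_bicategory_def by metis

lemma lam_hom: "f \<in> Arr1 B \<Longrightarrow> Lam B f \<in> hom2 B (Id1 B (Trg B f) \<cdot> f) f"
  using skew_bicategory unfolding skew_bicategory_def by metis

lemma lam_natural_hom: "\<phi> \<in> hom2 B f f' \<Longrightarrow> \<phi> \<bullet> Lam B f = Lam B f' \<bullet> (Id1 B (Trg B f) \<triangleright> \<phi>)"
  using skew_bicategory unfolding skew_bicategory_def by metis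

lemma rho_hom: "f \<in> Arr1 B \<Longrightarrow> Rho B f \<in> hom2 B f (f \<cdot> Id1 B (Src B f))"
  using skew_bicategory unfolding skew_bicategory_def by metis

lemma rho_natural_hom: "\<phi> \<in> hom2 B f f' \<Longrightarrow> Rho B f' \<bullet> \<phi> = (\<phi> \<triangleleft> Id1 B (Src B f)) \<bullet> Rho B f"
  using skew_bicategory unfolding skew_bicategory_def by metis

lemma interchange:
  "\<lbrakk>\<phi> \<in> Arr2 B; \<phi>' \<in> Arr2 B; \<psi> \<in> Arr2 B; \<psi>' \<in> Arr2 B;
    Dom B \<phi>' = Cod B \<phi>; Dom B \<psi>' = Cod B \<psi>; Trg B (Dom B \<phi>) = Src B (Dom B \<psi>)\<rbrakk>
   \<Longrightarrow> (\<psi>' \<bullet> \<psi>) \<star> (\<phi>' \<bullet> \<phi>) = (\<psi>' \<star> \<phi>') \<bullet> (\<psi> \<star> \<phi>)"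
  using skew_bicategory unfolding skew_bicategory_def hom2_def by auto

lemma alpha_natural:
  "\<lbrakk>\<phi> \<in> Arr2 B; \<psi> \<in> Arr2 B; \<chi> \<in> Arr2 B;
    Trg B (Dom B \<phi>) = Src B (Dom B \<psi>); Trg B (Dom B \<psi>) = Src B (Dom B \<chi>)\<rbrakk>
   \<Longrightarrow> Alpha B (Cod B \<phi>) (Cod B \<psi>) (Cod B \<chi>) \<bullet> ((\<chi> \<star> \<psi>) \<star> \<phi>)
     = (\<chi> \<star> \<psi> \<star> \<phi>) \<bullet> Alpha B (Dom B \<phi>) (Dom B \<psi>) (Dom B \<chi>)"
  using skew_bicategory unfolding skew_bicategory_def hom2_def by auto

lemma B2:
  assumes "f \<in> Arr1 B" "g \<in> Arr1 B" "Trg B f = Src B g"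
  shows "(g \<triangleright> Lam B f) \<bullet> Alpha B f (Id1 B (Trg B f)) g \<bullet> (Rho B g \<triangleleft> f) = Id2 B (g \<cdot> f)"
proof -
  have "\<forall>f g. f \<in> Arr1 B \<longrightarrow> g \<in> Arr1 B \<longrightarrow> Trg B f = Src B g \<longrightarrow>
      wr B g (Lam B f) \<bullet> Alpha B f (Id1 B (Trg B f)) g \<bullet> wl B (Rho B g) f = Id2 B (g \<cdot> f)"
    using skew_bicategory unfolding skew_bicategory_def by (elim conjE) assumption
  then show ?thesis using assms unfolding wl_def wr_def by blast
qed

lemma B4: "\<lbrakk>f \<in> Arr1 B; g \<in> Arr1 B; Trg B f = Src B g\<rbrakk>
   \<Longrightarrow> Alpha B (Id1 B (Src B f)) f g \<bullet> Rho B (g \<cdot> f) = g \<triangleright> Rho B f"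
  using skew_bicategory unfolding skew_bicategory_def wr_def by metis

lemma B5: "X \<in> Ob B \<Longrightarrow> Lam B (Id1 B X) \<bullet> Rho B (Id1 B X) = Id2 B (Id1 B X)"
  using skew_bicategory unfolding skew_bicategory_def by metis


lemma src_ob [simp]: "f \<in> Arr1 B \<Longrightarrow> Src B f \<in> Ob B"
  and trg_ob [simp]: "f \<in> Arr1 B \<Longrightarrow> Trg B f \<in> Ob B"
  by (simp_all add: arr1_ends)

lemma dom_arr [simp]: "\<phi> \<in> Arr2 B \<Longrightarrow> Dom B \<phi> \<in> Arr1 B"
  and cod_arr [simp]: "\<phi> \<in> Arr2 B \<Longrightarrow> Cod B \<phi> \<in> Arr1 B"
  and src_cod [simp]: "\<phi> \<in> Arr2 B \<Longrightarrow> Src B (Cod B \<phi>) = Src B (Dom B \<phi>)"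
  and trg_cod [simp]: "\<phi> \<in> Arr2 B \<Longrightarrow> Trg B (Cod B \<phi>) = Trg B (Dom B \<phi>)"
  using arr2_ends by auto

lemma id2_arr [simp]: "f \<in> Arr1 B \<Longrightarrow> Id2 B f \<in> Arr2 B"
  and id2_dom [simp]: "f \<in> Arr1 B \<Longrightarrow> Dom B (Id2 B f) = f"
  and id2_cod [simp]: "f \<in> Arr1 B \<Longrightarrow> Cod B (Id2 B f) = f"
  using id2_hom unfolding hom2_def by auto

lemma vcomp_arr [simp]:
    "\<lbrakk>\<phi> \<in> Arr2 B; \<psi> \<in> Arr2 B; Dom B \<psi> = Cod B \<phi>\<rbrakk> \<Longrightarrow> \<psi> \<bullet> \<phi> \<in> Arr2 B"
  and vcomp_dom [simp]:
    "\<lbrakk>\<phi> \<in> Arr2 B; \<psi> \<in> Arr2 B; Dom B \<psi> = Cod B \<phi>\<rbrakk> \<Longrightarrow> Dom B (\<psi> \<bullet> \<phi>) = Dom B \<phi>"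
  and vcomp_cod [simp]:
    "\<lbrakk>\<phi> \<in> Arr2 B; \<psi> \<in> Arr2 B; Dom B \<psi> = Cod B \<phi>\<rbrakk> \<Longrightarrow> Cod B (\<psi> \<bullet> \<phi>) = Cod B \<psi>"
  using vcomp_hom[of \<phi> "Dom B \<phi>" "Cod B \<phi>" \<psi> "Cod B \<psi>"] unfolding hom2_def by auto

lemma vcomp_assoc [simp]:
  "\<lbrakk>\<phi> \<in> Arr2 B; \<psi> \<in> Arr2 B; \<chi> \<in> Arr2 B; Dom B \<psi> = Cod B \<phi>; Dom B \<chi> = Cod B \<psi>\<rbrakk>
   \<Longrightarrow> (\<chi> \<bullet> \<psi>) \<bullet> \<phi> = \<chi> \<bullet> \<psi> \<bullet> \<phi>"
  using vcomp_assoc_hom[of \<phi> "Dom B \<phi>" "Cod B \<phi>" \<psi> "Cod B \<psi>" \<chi> "Cod B \<chi>"]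
  unfolding hom2_def by auto

lemma vcomp_id_left [simp]: "\<lbrakk>\<phi> \<in> Arr2 B; Cod B \<phi> = g\<rbrakk> \<Longrightarrow> Id2 B g \<bullet> \<phi> = \<phi>"
  and vcomp_id_right [simp]: "\<lbrakk>\<phi> \<in> Arr2 B; Dom B \<phi> = f\<rbrakk> \<Longrightarrow> \<phi> \<bullet> Id2 B f = \<phi>"
  using vcomp_unit_hom[of \<phi> "Dom B \<phi>" "Cod B \<phi>"] unfolding hom2_def by auto

lemma hcomp1_arr [simp]:
    "\<lbrakk>f \<in> Arr1 B; g \<in> Arr1 B; Trg B f = Src B g\<rbrakk> \<Longrightarrow> g \<cdot> f \<in> Arr1 B"
  and hcomp1_src [simp]:
    "\<lbrakk>f \<in> Arr1 B; g \<in> Arr1 B; Trg B f = Src B g\<rbrakk> \<Longrightarrow> Src B (g \<cdot> f) = Src B f"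
  and hcomp1_trg [simp]:
    "\<lbrakk>f \<in> Arr1 B; g \<in> Arr1 B; Trg B f = Src B g\<rbrakk> \<Longrightarrow> Trg B (g \<cdot> f) = Trg B g"
  using hcomp1_hom[of f "Src B f" "Trg B f" g "Trg B g"] unfolding hom1_def by auto

lemma hcomp2_arr [simp]:
    "\<lbrakk>\<phi> \<in> Arr2 B; \<psi> \<in> Arr2 B; Trg B (Dom B \<phi>) = Src B (Dom B \<psi>)\<rbrakk> \<Longrightarrow> \<psi> \<star> \<phi> \<in> Arr2 B"
  and hcomp2_dom [simp]:
    "\<lbrakk>\<phi> \<in> Arr2 B; \<psi> \<in> Arr2 B; Trg B (Dom B \<phi>) = Src B (Dom B \<psi>)\<rbrakk>
     \<Longrightarrow> Dom B (\<psi> \<star> \<phi>) = Dom B \<psi> \<cdot> Dom B \<phi>"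
  and hcomp2_cod [simp]:
    "\<lbrakk>\<phi> \<in> Arr2 B; \<psi> \<in> Arr2 B; Trg B (Dom B \<phi>) = Src B (Dom B \<psi>)\<rbrakk>
     \<Longrightarrow> Cod B (\<psi> \<star> \<phi>) = Cod B \<psi> \<cdot> Cod B \<phi>"
  using hcomp2_hom unfolding hom2_def by auto

lemma id1_arr [simp]: "X \<in> Ob B \<Longrightarrow> Id1 B X \<in> Arr1 B"
  and id1_src [simp]: "X \<in> Ob B \<Longrightarrow> Src B (Id1 B X) = X"
  and id1_trg [simp]: "X \<in> Ob B \<Longrightarrow> Trg B (Id1 B X) = X"
  using id1_hom unfolding hom1_def by auto

lemma alpha_arr [simp]:
    "\<lbrakk>f \<in> Arr1 B; g \<in> Arr1 B; h \<in> Arr1 B; Trg B f = Src B g; Trg B g = Src B h\<rbrakk>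
     \<Longrightarrow> Alpha B f g h \<in> Arr2 B"
  and alpha_dom [simp]:
    "\<lbrakk>f \<in> Arr1 B; g \<in> Arr1 B; h \<in> Arr1 B; Trg B f = Src B g; Trg B g = Src B h\<rbrakk>
     \<Longrightarrow> Dom B (Alpha B f g h) = (h \<cdot> g) \<cdot> f"
  and alpha_cod [simp]:
    "\<lbrakk>f \<in> Arr1 B; g \<in> Arr1 B; h \<in> Arr1 B; Trg B f = Src B g; Trg B g = Src B h\<rbrakk>
     \<Longrightarrow> Cod B (Alpha B f g h) = h \<cdot> g \<cdot> f"
  using alpha_hom unfolding hom2_def by auto

lemma lam_arr [simp]: "f \<in> Arr1 B \<Longrightarrow> Lam B f \<in> Arr2 B"
  and lam_dom [simp]: "f \<in> Arr1 B \<Longrightarrow> Dom B (Lam B f) = Id1 B (Trg B f) \<cdot> f"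
  and lam_cod [simp]: "f \<in> Arr1 B \<Longrightarrow> Cod B (Lam B f) = f"
  using lam_hom unfolding hom2_def by auto

lemma lam_natural:
  "\<phi> \<in> Arr2 B \<Longrightarrow> \<phi> \<bullet> Lam B (Dom B \<phi>) = Lam B (Cod B \<phi>) \<bullet> (Id1 B (Trg B (Dom B \<phi>)) \<triangleright> \<phi>)"
  using lam_natural_hom[of \<phi> "Dom B \<phi>" "Cod B \<phi>"] unfolding hom2_def by auto

lemma rho_arr [simp]: "f \<in> Arr1 B \<Longrightarrow> Rho B f \<in> Arr2 B"
  and rho_dom [simp]: "f \<in> Arr1 B \<Longrightarrow> Dom B (Rho B f) = f"
  and rho_cod [simp]: "f \<in> Arr1 B \<Longrightarrow> Cod B (Rho B f) = f \<cdot> Id1 B (Src B f)"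
  using rho_hom unfolding hom2_def by auto

lemma rho_natural:
  "\<phi> \<in> Arr2 B \<Longrightarrow> Rho B (Cod B \<phi>) \<bullet> \<phi> = (\<phi> \<triangleleft> Id1 B (Src B (Dom B \<phi>))) \<bullet> Rho B (Dom B \<phi>)"
  using rho_natural_hom[of \<phi> "Dom B \<phi>" "Cod B \<phi>"] unfolding hom2_def by auto

lemma whisker_left_vcomp:
  "\<lbrakk>\<phi> \<in> Arr2 B; \<psi> \<in> Arr2 B; Dom B \<psi> = Cod B \<phi>; g \<in> Arr1 B; Trg B (Dom B \<phi>) = Src B g\<rbrakk>
   \<Longrightarrow> g \<triangleright> (\<psi> \<bullet> \<phi>) = (g \<triangleright> \<psi>) \<bullet> (g \<triangleright> \<phi>)"
  using interchange[of \<phi> \<psi> "Id2 B g" "Id2 B g"] by simp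

lemma whisker_right_vcomp:
  "\<lbrakk>\<phi> \<in> Arr2 B; \<psi> \<in> Arr2 B; Dom B \<psi> = Cod B \<phi>; f \<in> Arr1 B; Trg B f = Src B (Dom B \<phi>)\<rbrakk>
   \<Longrightarrow> (\<psi> \<bullet> \<phi>) \<triangleleft> f = (\<psi> \<triangleleft> f) \<bullet> (\<phi> \<triangleleft> f)"
  using interchange[of "Id2 B f" "Id2 B f" \<phi> \<psi>] by simp

lemma whisker_exchange:
  "\<lbrakk>\<phi> \<in> Arr2 B; \<psi> \<in> Arr2 B; Trg B (Dom B \<phi>) = Src B (Dom B \<psi>)\<rbrakk>
   \<Longrightarrow> (Cod B \<psi> \<triangleright> \<phi>) \<bullet> (\<psi> \<triangleleft> Dom B \<phi>) = (\<psi> \<triangleleft> Cod B \<phi>) \<bullet> (Dom B \<psi> \<triangleright> \<phi>)"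
  using interchange[of "Id2 B (Dom B \<phi>)" \<phi> \<psi> "Id2 B (Cod B \<psi>)"]
    interchange[of \<phi> "Id2 B (Cod B \<phi>)" "Id2 B (Dom B \<psi>)" \<psi>] by simp

definition inv2 :: "'c \<Rightarrow> 'c" where
  "inv2 \<phi> = (SOME \<psi>. \<psi> \<in> hom2 B (Cod B \<phi>) (Dom B \<phi>) \<and>
      \<psi> \<bullet> \<phi> = Id2 B (Dom B \<phi>) \<and> \<phi> \<bullet> \<psi> = Id2 B (Cod B \<phi>))"

lemma inv2_spec:
  assumes "invertible2 B \<phi>"
  shows "inv2 \<phi> \<in> hom2 B (Cod B \<phi>) (Dom B \<phi>) \<and>
    inv2 \<phi> \<bullet> \<phi> = Id2 B (Dom B \<phi>) \<and> \<phi> \<bullet> inv2 \<phi> = Id2 B (Cod B \<phi>)"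
  unfolding inv2_def by (rule someI_ex) (use assms in \<open>auto simp: invertible2_def\<close>)

lemma invertible_arr: "invertible2 B \<phi> \<Longrightarrow> \<phi> \<in> Arr2 B"
  unfolding invertible2_def by blast

lemma inv2_arr [simp]: "invertible2 B \<phi> \<Longrightarrow> inv2 \<phi> \<in> Arr2 B"
  and inv2_dom [simp]: "invertible2 B \<phi> \<Longrightarrow> Dom B (inv2 \<phi>) = Cod B \<phi>"
  and inv2_cod [simp]: "invertible2 B \<phi> \<Longrightarrow> Cod B (inv2 \<phi>) = Dom B \<phi>"
  and inv2_comp_left [simp]: "invertible2 B \<phi> \<Longrightarrow> inv2 \<phi> \<bullet> \<phi> = Id2 B (Dom B \<phi>)"
  and inv2_comp_right [simp]: "invertible2 B \<phi> \<Longrightarrow> \<phi> \<bullet> inv2 \<phi> = Id2 B (Cod B \<phi>)"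
  using inv2_spec unfolding hom2_def by auto

lemma inv2_cancel_left [simp]:
  "\<lbrakk>invertible2 B \<phi>; \<chi> \<in> Arr2 B; Cod B \<chi> = Dom B \<phi>\<rbrakk> \<Longrightarrow> inv2 \<phi> \<bullet> \<phi> \<bullet> \<chi> = \<chi>"
  using invertible_arr[of \<phi>] by (simp flip: vcomp_assoc)

lemma inv2_cancel_right [simp]:
  "\<lbrakk>invertible2 B \<phi>; \<chi> \<in> Arr2 B; Cod B \<chi> = Cod B \<phi>\<rbrakk> \<Longrightarrow> \<phi> \<bullet> inv2 \<phi> \<bullet> \<chi> = \<chi>"
  using invertible_arr[of \<phi>] by (simp flip: vcomp_assoc)

lemma invertible_cancel_left:
  assumes eq: "\<phi> \<bullet> \<chi> = \<phi> \<bullet> \<chi>'"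
    and "invertible2 B \<phi>" "\<chi> \<in> Arr2 B" "\<chi>' \<in> Arr2 B" "Cod B \<chi> = Dom B \<phi>" "Cod B \<chi>' = Dom B \<phi>"
  shows "\<chi> = \<chi>'"
proof -
  have "\<chi> = inv2 \<phi> \<bullet> \<phi> \<bullet> \<chi>" and "\<chi>' = inv2 \<phi> \<bullet> \<phi> \<bullet> \<chi>'"
    using assms(2-6) by simp_all
  then show ?thesis using eq by simp
qed

lemma invertible_cancel_right:
  assumes eq: "\<chi> \<bullet> \<phi> = \<chi>' \<bullet> \<phi>"
    and "invertible2 B \<phi>" "\<chi> \<in> Arr2 B" "\<chi>' \<in> Arr2 B" "Dom B \<chi> = Cod B \<phi>" "Dom B \<chi>' = Cod B \<phi>"
  shows "\<chi> = \<chi>'"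
proof -
  have "\<phi> \<in> Arr2 B" using assms(2) by (rule invertible_arr)
  then have "\<chi> = (\<chi> \<bullet> \<phi>) \<bullet> inv2 \<phi>" and "\<chi>' = (\<chi>' \<bullet> \<phi>) \<bullet> inv2 \<phi>"
    using assms(2-6) by simp_all
  then show ?thesis using eq by simp
qed

lemma invertibleI:
  assumes "\<phi> \<in> Arr2 B" "\<psi> \<in> Arr2 B" "Dom B \<psi> = Cod B \<phi>" "Cod B \<psi> = Dom B \<phi>"
    and "\<psi> \<bullet> \<phi> = Id2 B (Dom B \<phi>)" "\<phi> \<bullet> \<psi> = Id2 B (Cod B \<phi>)"
  shows "invertible2 B \<phi>"
  using assms unfolding invertible2_def hom2_def by blast

lemma invertible_id2 [simp]: "f \<in> Arr1 B \<Longrightarrow> invertible2 B (Id2 B f)"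
  by (rule invertibleI[of _ "Id2 B f"]) simp_all

lemma invertible_vcomp [simp]:
  assumes "invertible2 B \<phi>" "invertible2 B \<psi>" "Dom B \<psi> = Cod B \<phi>"
  shows "invertible2 B (\<psi> \<bullet> \<phi>)"
  using assms invertible_arr[OF assms(1)] invertible_arr[OF assms(2)]
  by (intro invertibleI[of _ "inv2 \<phi> \<bullet> inv2 \<psi>"]) simp_all

lemma invertible_hcomp2 [simp]:
  assumes "invertible2 B \<phi>" "invertible2 B \<psi>" "Trg B (Dom B \<phi>) = Src B (Dom B \<psi>)"
  shows "invertible2 B (\<psi> \<star> \<phi>)"
  using assms invertible_arr[OF assms(1)] invertible_arr[OF assms(2)]
  by (intro invertibleI[of _ "inv2 \<psi> \<star> inv2 \<phi>"]) (simp_all flip: interchange)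

end

section \<open>Bicategories\<close>

locale bicat =
  fixes B :: "('o,'a,'c,'z) bicat_data_scheme"
  assumes bicategory: "bicategory B"

sublocale bicat \<subseteq> skew_bicat
  using bicategory unfolding bicategory_def by unfold_locales simp

context bicat
begin

lemma alpha_invertible [simp]:
    "\<lbrakk>f \<in> Arr1 B; g \<in> Arr1 B; h \<in> Arr1 B; Trg B f = Src B g; Trg B g = Src B h\<rbrakk>
     \<Longrightarrow> invertible2 B (Alpha B f g h)"
  and lam_invertible [simp]: "f \<in> Arr1 B \<Longrightarrow> invertible2 B (Lam B f)"
  using bicategory unfolding bicategory_def by blast+

text \<open>If \<open>\<epsilon> : u \<Rightarrow> 1\<^sub>Y\<close> is invertible, then whiskering with \<open>u\<close> is faithful: moving \<open>\<epsilon>\<close>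
  past \<open>u \<triangleright> \<theta>\<close> by interchange and cancelling it gives \<open>1 \<triangleright> \<theta> = 1 \<triangleright> \<theta>'\<close>, and cancelling the
  invertible \<open>\<lambda>\<close> gives \<open>\<theta> = \<theta>'\<close>.\<close>
lemma whisker_faithful:
  assumes eq: "u \<triangleright> \<theta> = u \<triangleright> \<theta>'"
    and \<epsilon>: "invertible2 B \<epsilon>" "Dom B \<epsilon> = u" "Cod B \<epsilon> = Id1 B Y" "Y \<in> Ob B"
    and \<theta>: "\<theta> \<in> Arr2 B" "\<theta>' \<in> Arr2 B" "Dom B \<theta>' = Dom B \<theta>" "Cod B \<theta>' = Cod B \<theta>"
      "Trg B (Dom B \<theta>) = Y"
  shows "\<theta> = \<theta>'"
proof -
  have \<epsilon>_arr: "\<epsilon> \<in> Arr2 B" using \<epsilon>(1) by (rule invertible_arr)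
  have u: "u \<in> Arr1 B" "Src B u = Y" "Trg B u = Y"
    using \<epsilon> src_cod[OF \<epsilon>_arr] trg_cod[OF \<epsilon>_arr] by (auto simp: \<epsilon>_arr)
  have exchange: "(Id1 B Y \<triangleright> \<chi>) \<bullet> (\<epsilon> \<triangleleft> Dom B \<theta>) = (\<epsilon> \<triangleleft> Cod B \<theta>) \<bullet> (u \<triangleright> \<chi>)"
    if "\<chi> \<in> {\<theta>, \<theta>'}" for \<chi>
    using whisker_exchange[of \<chi> \<epsilon>] that \<epsilon> \<epsilon>_arr u \<theta> by auto
  have identity_whiskered: "Id1 B Y \<triangleright> \<theta> = Id1 B Y \<triangleright> \<theta>'"
  proof (rule invertible_cancel_right[where \<phi>="\<epsilon> \<triangleleft> Dom B \<theta>"])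
    show "(Id1 B Y \<triangleright> \<theta>) \<bullet> (\<epsilon> \<triangleleft> Dom B \<theta>) = (Id1 B Y \<triangleright> \<theta>') \<bullet> (\<epsilon> \<triangleleft> Dom B \<theta>)"
      using exchange eq by simp
  qed (use \<epsilon> \<epsilon>_arr u \<theta> in simp_all)
  show ?thesis
  proof (rule invertible_cancel_right[where \<phi>="Lam B (Dom B \<theta>)"])
    show "\<theta> \<bullet> Lam B (Dom B \<theta>) = \<theta>' \<bullet> Lam B (Dom B \<theta>)"
      using lam_natural[of \<theta>] lam_natural[of \<theta>'] identity_whiskered \<theta> by simp
  qed (use \<theta> in simp_all)
qed

end

section \<open>Warping data with invertible constraints\<close>

locale invertible_warping_data = bicat B for B :: "('o,'a,'c,'z) bicat_data_scheme" +
  fixes W :: "('o,'a,'c,'w) warp_data_scheme"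
  assumes warping_data: "warping_data B W"
    and warping_invertible: "warping_invertible B W"
begin

abbreviation D :: "'o \<Rightarrow> 'o" where "D \<equiv> WD W"
abbreviation T :: "'o \<Rightarrow> 'o \<Rightarrow> 'a \<Rightarrow> 'a" where "T \<equiv> WT W"
abbreviation T2 :: "'o \<Rightarrow> 'o \<Rightarrow> 'c \<Rightarrow> 'c" where "T2 \<equiv> WT2 W"
abbreviation K :: "'o \<Rightarrow> 'a" where "K \<equiv> WK W"
abbreviation v :: "'o \<Rightarrow> 'o \<Rightarrow> 'o \<Rightarrow> 'a \<Rightarrow> 'a \<Rightarrow> 'c" where "v \<equiv> Wv W"
abbreviation k :: "'o \<Rightarrow> 'o \<Rightarrow> 'a \<Rightarrow> 'c" where "k \<equiv> Wk W"
abbreviation v0 :: "'o \<Rightarrow> 'c" where "v0 \<equiv> Wv0 W"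

lemma D_ob [simp]: "X \<in> Ob B \<Longrightarrow> D X \<in> Ob B"
  using warping_data unfolding warping_data_def by metis

lemma T_hom: "\<lbrakk>X \<in> Ob B; Y \<in> Ob B; f \<in> hom1 B X (D Y)\<rbrakk> \<Longrightarrow> T X Y f \<in> hom1 B (D X) (D Y)"
  using warping_data unfolding warping_data_def by metis

lemma T2_hom: "\<lbrakk>X \<in> Ob B; Y \<in> Ob B; f \<in> hom1 B X (D Y); \<phi> \<in> hom2 B f g\<rbrakk>
   \<Longrightarrow> T2 X Y \<phi> \<in> hom2 B (T X Y f) (T X Y g)"
  using warping_data unfolding warping_data_def by metis

lemma T2_id_hom: "\<lbrakk>X \<in> Ob B; Y \<in> Ob B; f \<in> hom1 B X (D Y)\<rbrakk> \<Longrightarrow> T2 X Y (Id2 B f) = Id2 B (T X Y f)"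
  using warping_data unfolding warping_data_def by metis

lemma T2_vcomp_hom: "\<lbrakk>X \<in> Ob B; Y \<in> Ob B; f \<in> hom1 B X (D Y); \<phi> \<in> hom2 B f g; \<psi> \<in> hom2 B g h\<rbrakk>
   \<Longrightarrow> T2 X Y (\<psi> \<bullet> \<phi>) = T2 X Y \<psi> \<bullet> T2 X Y \<phi>"
  using warping_data unfolding warping_data_def by metis

lemma K_hom: "X \<in> Ob B \<Longrightarrow> K X \<in> hom1 B X (D X)"
  using warping_data unfolding warping_data_def by metis

lemma v_hom: "\<lbrakk>X \<in> Ob B; Y \<in> Ob B; Z \<in> Ob B; f \<in> hom1 B X (D Y); g \<in> hom1 B Y (D Z)\<rbrakk>
   \<Longrightarrow> v X Y Z g f \<in> hom2 B (T X Z (T Y Z g \<cdot> f)) (T Y Z g \<cdot> T X Y f)"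
  using warping_data unfolding warping_data_def by metis

lemma v_natural_hom: "\<lbrakk>X \<in> Ob B; Y \<in> Ob B; Z \<in> Ob B; f \<in> hom1 B X (D Y); g \<in> hom1 B Y (D Z);
    \<phi> \<in> hom2 B f f'; \<psi> \<in> hom2 B g g'\<rbrakk>
   \<Longrightarrow> v X Y Z g' f' \<bullet> T2 X Z (T2 Y Z \<psi> \<star> \<phi>) = (T2 Y Z \<psi> \<star> T2 X Y \<phi>) \<bullet> v X Y Z g f"
  using warping_data unfolding warping_data_def by metis

lemma k_hom: "\<lbrakk>X \<in> Ob B; Y \<in> Ob B; f \<in> hom1 B X (D Y)\<rbrakk> \<Longrightarrow> k X Y f \<in> hom2 B f (T X Y f \<cdot> K X)"
  using warping_data unfolding warping_data_def by metis

lemma k_natural_hom: "\<lbrakk>X \<in> Ob B; Y \<in> Ob B; f \<in> hom1 B X (D Y); \<phi> \<in> hom2 B f f'\<rbrakk>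
   \<Longrightarrow> k X Y f' \<bullet> \<phi> = (T2 X Y \<phi> \<triangleleft> K X) \<bullet> k X Y f"
  using warping_data unfolding warping_data_def wl_def by metis

lemma v0_hom: "Y \<in> Ob B \<Longrightarrow> v0 Y \<in> hom2 B (T Y Y (K Y)) (Id1 B (D Y))"
  using warping_data unfolding warping_data_def by metis


lemma T_arr [simp]:
    "\<lbrakk>X \<in> Ob B; Y \<in> Ob B; f \<in> Arr1 B; Src B f = X; Trg B f = D Y\<rbrakk> \<Longrightarrow> T X Y f \<in> Arr1 B"
  and T_src [simp]:
    "\<lbrakk>X \<in> Ob B; Y \<in> Ob B; f \<in> Arr1 B; Src B f = X; Trg B f = D Y\<rbrakk> \<Longrightarrow> Src B (T X Y f) = D X"
  and T_trg [simp]: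
    "\<lbrakk>X \<in> Ob B; Y \<in> Ob B; f \<in> Arr1 B; Src B f = X; Trg B f = D Y\<rbrakk> \<Longrightarrow> Trg B (T X Y f) = D Y"
  using T_hom[of X Y f] unfolding hom1_def by auto

lemma T2_arr [simp]:
    "\<lbrakk>X \<in> Ob B; Y \<in> Ob B; \<phi> \<in> Arr2 B; Src B (Dom B \<phi>) = X; Trg B (Dom B \<phi>) = D Y\<rbrakk>
     \<Longrightarrow> T2 X Y \<phi> \<in> Arr2 B"
  and T2_dom [simp]:
    "\<lbrakk>X \<in> Ob B; Y \<in> Ob B; \<phi> \<in> Arr2 B; Src B (Dom B \<phi>) = X; Trg B (Dom B \<phi>) = D Y\<rbrakk>
     \<Longrightarrow> Dom B (T2 X Y \<phi>) = T X Y (Dom B \<phi>)"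
  and T2_cod [simp]:
    "\<lbrakk>X \<in> Ob B; Y \<in> Ob B; \<phi> \<in> Arr2 B; Src B (Dom B \<phi>) = X; Trg B (Dom B \<phi>) = D Y\<rbrakk>
     \<Longrightarrow> Cod B (T2 X Y \<phi>) = T X Y (Cod B \<phi>)"
  using T2_hom[of X Y "Dom B \<phi>" \<phi> "Cod B \<phi>"] unfolding hom1_def hom2_def by auto

lemma T2_id [simp]:
  "\<lbrakk>X \<in> Ob B; Y \<in> Ob B; f \<in> Arr1 B; Src B f = X; Trg B f = D Y\<rbrakk>
   \<Longrightarrow> T2 X Y (Id2 B f) = Id2 B (T X Y f)"
  using T2_id_hom[of X Y f] unfolding hom1_def by auto

lemma T2_vcomp:
  "\<lbrakk>X \<in> Ob B; Y \<in> Ob B; \<phi> \<in> Arr2 B; \<psi> \<in> Arr2 B; Dom B \<psi> = Cod B \<phi>;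
    Src B (Dom B \<phi>) = X; Trg B (Dom B \<phi>) = D Y\<rbrakk>
   \<Longrightarrow> T2 X Y (\<psi> \<bullet> \<phi>) = T2 X Y \<psi> \<bullet> T2 X Y \<phi>"
  using T2_vcomp_hom[of X Y "Dom B \<phi>" \<phi> "Cod B \<phi>" \<psi> "Cod B \<psi>"] unfolding hom1_def hom2_def by auto

lemma K_arr [simp]: "X \<in> Ob B \<Longrightarrow> K X \<in> Arr1 B"
  and K_src [simp]: "X \<in> Ob B \<Longrightarrow> Src B (K X) = X"
  and K_trg [simp]: "X \<in> Ob B \<Longrightarrow> Trg B (K X) = D X"
  using K_hom[of X] unfolding hom1_def by auto

lemma v_arr [simp]:
    "\<lbrakk>X \<in> Ob B; Y \<in> Ob B; Z \<in> Ob B; f \<in> Arr1 B; Src B f = X; Trg B f = D Y;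
      g \<in> Arr1 B; Src B g = Y; Trg B g = D Z\<rbrakk> \<Longrightarrow> v X Y Z g f \<in> Arr2 B"
  and v_dom [simp]:
    "\<lbrakk>X \<in> Ob B; Y \<in> Ob B; Z \<in> Ob B; f \<in> Arr1 B; Src B f = X; Trg B f = D Y;
      g \<in> Arr1 B; Src B g = Y; Trg B g = D Z\<rbrakk> \<Longrightarrow> Dom B (v X Y Z g f) = T X Z (T Y Z g \<cdot> f)"
  and v_cod [simp]:
    "\<lbrakk>X \<in> Ob B; Y \<in> Ob B; Z \<in> Ob B; f \<in> Arr1 B; Src B f = X; Trg B f = D Y;
      g \<in> Arr1 B; Src B g = Y; Trg B g = D Z\<rbrakk> \<Longrightarrow> Cod B (v X Y Z g f) = T Y Z g \<cdot> T X Y f"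
  using v_hom[of X Y Z f g] unfolding hom1_def hom2_def by auto

lemma v_natural:
  "\<lbrakk>X \<in> Ob B; Y \<in> Ob B; Z \<in> Ob B; \<phi> \<in> Arr2 B; \<psi> \<in> Arr2 B;
    Src B (Dom B \<phi>) = X; Trg B (Dom B \<phi>) = D Y; Src B (Dom B \<psi>) = Y; Trg B (Dom B \<psi>) = D Z\<rbrakk>
   \<Longrightarrow> v X Y Z (Cod B \<psi>) (Cod B \<phi>) \<bullet> T2 X Z (T2 Y Z \<psi> \<star> \<phi>)
     = (T2 Y Z \<psi> \<star> T2 X Y \<phi>) \<bullet> v X Y Z (Dom B \<psi>) (Dom B \<phi>)"
  using v_natural_hom[of X Y Z "Dom B \<phi>" "Dom B \<psi>" \<phi> "Cod B \<phi>" \<psi> "Cod B \<psi>"]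
  unfolding hom1_def hom2_def by auto

lemma k_arr [simp]:
    "\<lbrakk>X \<in> Ob B; Y \<in> Ob B; f \<in> Arr1 B; Src B f = X; Trg B f = D Y\<rbrakk> \<Longrightarrow> k X Y f \<in> Arr2 B"
  and k_dom [simp]:
    "\<lbrakk>X \<in> Ob B; Y \<in> Ob B; f \<in> Arr1 B; Src B f = X; Trg B f = D Y\<rbrakk> \<Longrightarrow> Dom B (k X Y f) = f"
  and k_cod [simp]:
    "\<lbrakk>X \<in> Ob B; Y \<in> Ob B; f \<in> Arr1 B; Src B f = X; Trg B f = D Y\<rbrakk>
     \<Longrightarrow> Cod B (k X Y f) = T X Y f \<cdot> K X"
  using k_hom[of X Y f] unfolding hom1_def hom2_def by auto

lemma k_natural:
  "\<lbrakk>X \<in> Ob B; Y \<in> Ob B; \<phi> \<in> Arr2 B; Src B (Dom B \<phi>) = X; Trg B (Dom B \<phi>) = D Y\<rbrakk>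
   \<Longrightarrow> k X Y (Cod B \<phi>) \<bullet> \<phi> = (T2 X Y \<phi> \<triangleleft> K X) \<bullet> k X Y (Dom B \<phi>)"
  using k_natural_hom[of X Y "Dom B \<phi>" \<phi> "Cod B \<phi>"] unfolding hom1_def hom2_def by auto

lemma v0_arr [simp]: "Y \<in> Ob B \<Longrightarrow> v0 Y \<in> Arr2 B"
  and v0_dom [simp]: "Y \<in> Ob B \<Longrightarrow> Dom B (v0 Y) = T Y Y (K Y)"
  and v0_cod [simp]: "Y \<in> Ob B \<Longrightarrow> Cod B (v0 Y) = Id1 B (D Y)"
  using v0_hom[of Y] unfolding hom2_def by auto

lemma v_invertible [simp]:
    "\<lbrakk>X \<in> Ob B; Y \<in> Ob B; Z \<in> Ob B; f \<in> Arr1 B; Src B f = X; Trg B f = D Y;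
      g \<in> Arr1 B; Src B g = Y; Trg B g = D Z\<rbrakk> \<Longrightarrow> invertible2 B (v X Y Z g f)"
  and k_invertible [simp]:
    "\<lbrakk>X \<in> Ob B; Y \<in> Ob B; f \<in> Arr1 B; Src B f = X; Trg B f = D Y\<rbrakk> \<Longrightarrow> invertible2 B (k X Y f)"
  and v0_invertible [simp]: "Y \<in> Ob B \<Longrightarrow> invertible2 B (v0 Y)"
  using warping_invertible unfolding warping_invertible_def hom1_def by blast+

lemma T2_invertible [simp]:
  assumes "invertible2 B \<phi>" "X \<in> Ob B" "Y \<in> Ob B" "Src B (Dom B \<phi>) = X" "Trg B (Dom B \<phi>) = D Y"
  shows "invertible2 B (T2 X Y \<phi>)"
proof -
  have \<phi>: "\<phi> \<in> Arr2 B" using assms(1) by (rule invertible_arr)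
  show ?thesis
    by (rule invertibleI[of _ "T2 X Y (inv2 \<phi>)"])
      (use assms \<phi> in \<open>simp_all flip: T2_vcomp\<close>)
qed

text \<open>Since the components of \<open>k\<close> are invertible, naturality of \<open>k\<close> shows that each \<open>T\<close>
  is faithful: \<open>\<phi>\<close> is recovered from \<open>T\<phi>\<close> as \<open>k\<^sup>-\<^sup>1 \<bullet> (T\<phi> \<triangleleft> K) \<bullet> k\<close>.\<close>
lemma T_faithful:
  assumes eq: "T2 X Y \<phi> = T2 X Y \<psi>"
    and "X \<in> Ob B" "Y \<in> Ob B" "\<phi> \<in> Arr2 B" "\<psi> \<in> Arr2 B" "Dom B \<psi> = Dom B \<phi>"
      "Cod B \<psi> = Cod B \<phi>" "Src B (Dom B \<phi>) = X" "Trg B (Dom B \<phi>) = D Y"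
  shows "\<phi> = \<psi>"
proof (rule invertible_cancel_left[of "k X Y (Cod B \<phi>)"])
  show "k X Y (Cod B \<phi>) \<bullet> \<phi> = k X Y (Cod B \<phi>) \<bullet> \<psi>"
    using k_natural[of X Y \<phi>] k_natural[of X Y \<psi>] assms by simp
qed (use assms in simp_all)

end

section \<open>Consequences of (W1) and (W2)\<close>

locale warping_W12 = invertible_warping_data B W
    for B :: "('o,'a,'c,'z) bicat_data_scheme" and W :: "('o,'a,'c,'w) warp_data_scheme" +
  assumes W1: "W1 B W" and W2: "W2 B W"
begin

lemma W1_at:
  assumes "X \<in> Ob B" "Y \<in> Ob B" "Z \<in> Ob B" "V \<in> Ob B"
    and "f \<in> Arr1 B" "Src B f = X" "Trg B f = D Y"
    and "g \<in> Arr1 B" "Src B g = Y" "Trg B g = D Z"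
    and "h \<in> Arr1 B" "Src B h = Z" "Trg B h = D V"
  shows "Alpha B (T X Y f) (T Y Z g) (T Z V h) \<bullet> (v Y Z V h g \<triangleleft> T X Y f) \<bullet> v X Y V (T Z V h \<cdot> g) f
     = (T Z V h \<triangleright> v X Y Z g f) \<bullet> v X Z V h (T Y Z g \<cdot> f)
         \<bullet> T2 X V (Alpha B f (T Y Z g) (T Z V h)) \<bullet> T2 X V (v Y Z V h g \<triangleleft> f)"
proof -
  have "f \<in> hom1 B X (D Y)" "g \<in> hom1 B Y (D Z)" "h \<in> hom1 B Z (D V)"
    using assms unfolding hom1_def by auto
  from W1[unfolded W1_def Let_def, rule_format, OF assms(1-4) this]
  show ?thesis unfolding wl_def wr_def .
qed

lemma W2_at:
  assumes "X \<in> Ob B" "Y \<in> Ob B" "f \<in> Arr1 B" "Src B f = X" "Trg B f = D Y"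
  shows "(T X Y f \<triangleright> v0 X) \<bullet> v X X Y f (K X) \<bullet> T2 X Y (k X Y f) = Rho B (T X Y f)"
proof -
  have "f \<in> hom1 B X (D Y)" using assms unfolding hom1_def by auto
  from W2[unfolded W2_def, rule_format, OF assms(1-2) this]
  show ?thesis unfolding wr_def .
qed

text \<open>Both sides of (W4) for \<open>f : X \<rightarrow> DY\<close> and \<open>g : Y \<rightarrow> DZ\<close> are compared after applying \<open>T\<close> and
  composing with the following invertible 2-cell \<open>T(Tg\<cdot>(Tf\<cdot>K)) \<Rightarrow> Tg\<cdot>(Tf\<cdot>1)\<close>.\<close>
definition W4_transport :: "'o \<Rightarrow> 'o \<Rightarrow> 'o \<Rightarrow> 'a \<Rightarrow> 'a \<Rightarrow> 'c" where
  "W4_transport X Y Z f g = (T Y Z g \<triangleright> T X Y f \<triangleright> v0 X) \<bullet> (T Y Z g \<triangleright> v X X Y f (K X))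
     \<bullet> v X Y Z g (T X Y f \<cdot> K X)"

text \<open>The right-hand side of (W4), transported: naturality of \<open>v\<close> and (W2) for \<open>f\<close>.\<close>
lemma W4_transport_rhs:
  assumes X: "X \<in> Ob B" and Y: "Y \<in> Ob B" and Z: "Z \<in> Ob B"
    and f: "f \<in> Arr1 B" "Src B f = X" "Trg B f = D Y"
    and g: "g \<in> Arr1 B" "Src B g = Y" "Trg B g = D Z"
  shows "W4_transport X Y Z f g \<bullet> T2 X Z (T Y Z g \<triangleright> k X Y f)
    = (T Y Z g \<triangleright> Rho B (T X Y f)) \<bullet> v X Y Z g f"
proof -
  let ?Tf = "T X Y f" and ?Tg = "T Y Z g"
  note cells = X Y Z f g
  have "W4_transport X Y Z f g \<bullet> T2 X Z (?Tg \<triangleright> k X Y f)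
      = (?Tg \<triangleright> ?Tf \<triangleright> v0 X) \<bullet> (?Tg \<triangleright> v X X Y f (K X)) \<bullet> (?Tg \<triangleright> T2 X Y (k X Y f)) \<bullet> v X Y Z g f"
    using v_natural[of X Y Z "k X Y f" "Id2 B g"] cells by (simp add: W4_transport_def)
  also have "\<dots> = (?Tg \<triangleright> ((?Tf \<triangleright> v0 X) \<bullet> v X X Y f (K X) \<bullet> T2 X Y (k X Y f))) \<bullet> v X Y Z g f"
    using cells by (simp add: whisker_left_vcomp)
  also have "\<dots> = (?Tg \<triangleright> Rho B ?Tf) \<bullet> v X Y Z g f"
    using W2_at[of X Y f] cells by simp
  finally show ?thesis .
qed

text \<open>The left-hand side of (W4), transported: (W1) for \<open>(K,f,g)\<close> and (W2) for \<open>Tg\<cdot>f\<close>, followed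
  by the coherence axiom (B4).\<close>
lemma W4_transport_lhs:
  assumes X: "X \<in> Ob B" and Y: "Y \<in> Ob B" and Z: "Z \<in> Ob B"
    and f: "f \<in> Arr1 B" "Src B f = X" "Trg B f = D Y"
    and g: "g \<in> Arr1 B" "Src B g = Y" "Trg B g = D Z"
  shows "W4_transport X Y Z f g
      \<bullet> T2 X Z (Alpha B (K X) (T X Y f) (T Y Z g) \<bullet> (v X Y Z g f \<triangleleft> K X) \<bullet> k X Z (T Y Z g \<cdot> f))
    = (T Y Z g \<triangleright> Rho B (T X Y f)) \<bullet> v X Y Z g f"
proof -
  let ?Tf = "T X Y f" and ?Tg = "T Y Z g" and ?TK = "T X X (K X)" and ?one = "Id1 B (D X)"
  let ?gf = "T Y Z g \<cdot> f" and ?v = "v X Y Z g f"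
  note cells = X Y Z f g
  have "W4_transport X Y Z f g \<bullet> T2 X Z (Alpha B (K X) ?Tf ?Tg \<bullet> (?v \<triangleleft> K X) \<bullet> k X Z ?gf)
      = (?Tg \<triangleright> ?Tf \<triangleright> v0 X) \<bullet> ((?Tg \<triangleright> v X X Y f (K X)) \<bullet> v X Y Z g (?Tf \<cdot> K X)
          \<bullet> T2 X Z (Alpha B (K X) ?Tf ?Tg) \<bullet> T2 X Z (?v \<triangleleft> K X)) \<bullet> T2 X Z (k X Z ?gf)"
    using cells by (simp add: W4_transport_def T2_vcomp)
  also have "\<dots> = (?Tg \<triangleright> ?Tf \<triangleright> v0 X) \<bullet> (Alpha B ?TK ?Tf ?Tg \<bullet> (?v \<triangleleft> ?TK) \<bullet> v X X Z ?gf (K X))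
          \<bullet> T2 X Z (k X Z ?gf)"
    using W1_at[of X X Y Z "K X" f g] cells by (simp del: vcomp_assoc)
  also have "\<dots> = ((?Tg \<triangleright> ?Tf \<triangleright> v0 X) \<bullet> Alpha B ?TK ?Tf ?Tg) \<bullet> (?v \<triangleleft> ?TK) \<bullet> v X X Z ?gf (K X)
          \<bullet> T2 X Z (k X Z ?gf)"
    using cells by simp
  also have "\<dots> = (Alpha B ?one ?Tf ?Tg \<bullet> (?Tg \<cdot> ?Tf \<triangleright> v0 X)) \<bullet> (?v \<triangleleft> ?TK) \<bullet> v X X Z ?gf (K X)
          \<bullet> T2 X Z (k X Z ?gf)"
    using alpha_natural[of "v0 X" "Id2 B ?Tf" "Id2 B ?Tg"] cells by (simp del: vcomp_assoc)
  also have "\<dots> = Alpha B ?one ?Tf ?Tg \<bullet> ((?Tg \<cdot> ?Tf \<triangleright> v0 X) \<bullet> (?v \<triangleleft> ?TK)) \<bullet> v X X Z ?gf (K X)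
          \<bullet> T2 X Z (k X Z ?gf)"
    using cells by simp
  also have "\<dots> = Alpha B ?one ?Tf ?Tg \<bullet> ((?v \<triangleleft> ?one) \<bullet> (T X Z ?gf \<triangleright> v0 X)) \<bullet> v X X Z ?gf (K X)
          \<bullet> T2 X Z (k X Z ?gf)"
    using whisker_exchange[of "v0 X" ?v] cells by (simp del: vcomp_assoc)
  also have "\<dots> = Alpha B ?one ?Tf ?Tg \<bullet> (?v \<triangleleft> ?one) \<bullet> Rho B (T X Z ?gf)"
    using W2_at[of X Z ?gf] cells by simp
  also have "\<dots> = Alpha B ?one ?Tf ?Tg \<bullet> Rho B (?Tg \<cdot> ?Tf) \<bullet> ?v"
    using rho_natural[of ?v] cells by simp
  also have "\<dots> = (?Tg \<triangleright> Rho B ?Tf) \<bullet> ?v"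
    using B4[of ?Tf ?Tg] cells by (simp flip: vcomp_assoc)
  finally show ?thesis .
qed

text \<open>(W4) holds: the transported sides agree, the transport is invertible and \<open>T\<close> is faithful.\<close>
lemma W4_at:
  assumes X: "X \<in> Ob B" and Y: "Y \<in> Ob B" and Z: "Z \<in> Ob B"
    and f: "f \<in> Arr1 B" "Src B f = X" "Trg B f = D Y"
    and g: "g \<in> Arr1 B" "Src B g = Y" "Trg B g = D Z"
  shows "Alpha B (K X) (T X Y f) (T Y Z g) \<bullet> (v X Y Z g f \<triangleleft> K X) \<bullet> k X Z (T Y Z g \<cdot> f)
    = T Y Z g \<triangleright> k X Y f"  (is "?L = ?R")
proof -
  note cells = X Y Z f g
  have "W4_transport X Y Z f g \<bullet> T2 X Z ?L = W4_transport X Y Z f g \<bullet> T2 X Z ?R"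
    using W4_transport_lhs[OF cells] W4_transport_rhs[OF cells] by simp
  then have "T2 X Z ?L = T2 X Z ?R"
    by (rule invertible_cancel_left) (use cells in \<open>simp_all add: W4_transport_def\<close>)
  then show ?thesis
    by (rule T_faithful) (use cells in simp_all)
qed

text \<open>A consequence of (W2) for \<open>K\<close> and the axiom (B2): for every \<open>u\<close> into \<open>DY\<close> the following
  composite \<open>TK\<cdot>u \<Rightarrow> TK\<cdot>u\<close> is the identity.\<close>
lemma K_unit_law:
  assumes Y: "Y \<in> Ob B" and u: "u \<in> Arr1 B" "Trg B u = D Y"
  shows "(T Y Y (K Y) \<triangleright> Lam B u) \<bullet> (T Y Y (K Y) \<triangleright> (v0 Y \<triangleleft> u)) \<bullet> Alpha B u (T Y Y (K Y)) (T Y Y (K Y))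
      \<bullet> (v Y Y Y (K Y) (K Y) \<triangleleft> u) \<bullet> (T2 Y Y (k Y Y (K Y)) \<triangleleft> u)
    = Id2 B (T Y Y (K Y) \<cdot> u)"
proof -
  let ?TK = "T Y Y (K Y)" and ?one = "Id1 B (D Y)"
  note cells = Y u
  have "(?TK \<triangleright> Lam B u) \<bullet> (?TK \<triangleright> (v0 Y \<triangleleft> u)) \<bullet> Alpha B u ?TK ?TK
      \<bullet> (v Y Y Y (K Y) (K Y) \<triangleleft> u) \<bullet> (T2 Y Y (k Y Y (K Y)) \<triangleleft> u)
    = (?TK \<triangleright> Lam B u) \<bullet> ((?TK \<triangleright> (v0 Y \<triangleleft> u)) \<bullet> Alpha B u ?TK ?TK)
      \<bullet> (v Y Y Y (K Y) (K Y) \<triangleleft> u) \<bullet> (T2 Y Y (k Y Y (K Y)) \<triangleleft> u)"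
    using cells by simp
  also have "\<dots> = (?TK \<triangleright> Lam B u) \<bullet> (Alpha B u ?one ?TK \<bullet> ((?TK \<triangleright> v0 Y) \<triangleleft> u))
      \<bullet> (v Y Y Y (K Y) (K Y) \<triangleleft> u) \<bullet> (T2 Y Y (k Y Y (K Y)) \<triangleleft> u)"
    using alpha_natural[of "Id2 B u" "v0 Y" "Id2 B ?TK"] cells by (simp del: vcomp_assoc)
  also have "\<dots> = (?TK \<triangleright> Lam B u) \<bullet> Alpha B u ?one ?TK
      \<bullet> (((?TK \<triangleright> v0 Y) \<bullet> v Y Y Y (K Y) (K Y) \<bullet> T2 Y Y (k Y Y (K Y))) \<triangleleft> u)"
    using cells by (simp add: whisker_right_vcomp)
  also have "\<dots> = (?TK \<triangleright> Lam B u) \<bullet> Alpha B u ?one ?TK \<bullet> (Rho B ?TK \<triangleleft> u)"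
    using W2_at[of Y Y "K Y"] cells by simp
  also have "\<dots> = Id2 B (?TK \<cdot> u)"
    using B2[of u ?TK] cells by simp
  finally show ?thesis .
qed

text \<open>Both sides of (W3) for \<open>f : X \<rightarrow> DY\<close> are compared after whiskering with \<open>TK\<close> and
  composing with the following invertible 2-cell \<open>T(TK\<cdot>f) \<Rightarrow> TK\<cdot>T(TK\<cdot>f)\<close>.\<close>
definition W3_transport :: "'o \<Rightarrow> 'o \<Rightarrow> 'a \<Rightarrow> 'c" where
  "W3_transport X Y f = v X Y Y (K Y) (T Y Y (K Y) \<cdot> f) \<bullet> T2 X Y (Alpha B f (T Y Y (K Y)) (T Y Y (K Y)))
     \<bullet> T2 X Y (v Y Y Y (K Y) (K Y) \<triangleleft> f) \<bullet> T2 X Y (T2 Y Y (k Y Y (K Y)) \<triangleleft> f)"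

text \<open>The left-hand side of (W3), transported: (W1) for \<open>(f,K,K)\<close>, naturality of \<open>v\<close> and the
  unit law for \<open>Tf\<close>.\<close>
lemma W3_transport_lhs:
  assumes X: "X \<in> Ob B" and Y: "Y \<in> Ob B" and f: "f \<in> Arr1 B" "Src B f = X" "Trg B f = D Y"
  shows "(T Y Y (K Y) \<triangleright> (Lam B (T X Y f) \<bullet> (v0 Y \<triangleleft> T X Y f) \<bullet> v X Y Y (K Y) f)) \<bullet> W3_transport X Y f
    = v X Y Y (K Y) f"
proof -
  let ?Tf = "T X Y f" and ?TK = "T Y Y (K Y)"
  let ?vKK = "v Y Y Y (K Y) (K Y)" and ?kK = "T2 Y Y (k Y Y (K Y))" and ?vKf = "v X Y Y (K Y) f"
  note cells = X Y f
  have "(?TK \<triangleright> (Lam B ?Tf \<bullet> (v0 Y \<triangleleft> ?Tf) \<bullet> ?vKf)) \<bullet> W3_transport X Y f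
      = (?TK \<triangleright> Lam B ?Tf) \<bullet> (?TK \<triangleright> (v0 Y \<triangleleft> ?Tf))
        \<bullet> ((?TK \<triangleright> ?vKf) \<bullet> v X Y Y (K Y) (?TK \<cdot> f) \<bullet> T2 X Y (Alpha B f ?TK ?TK) \<bullet> T2 X Y (?vKK \<triangleleft> f))
        \<bullet> T2 X Y (?kK \<triangleleft> f)"
    using cells by (simp add: W3_transport_def whisker_left_vcomp)
  also have "\<dots> = (?TK \<triangleright> Lam B ?Tf) \<bullet> (?TK \<triangleright> (v0 Y \<triangleleft> ?Tf))
        \<bullet> (Alpha B ?Tf ?TK ?TK \<bullet> (?vKK \<triangleleft> ?Tf) \<bullet> v X Y Y (?TK \<cdot> K Y) f) \<bullet> T2 X Y (?kK \<triangleleft> f)"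
    using W1_at[of X Y Y Y f "K Y" "K Y"] cells by (simp del: vcomp_assoc)
  also have "\<dots> = ((?TK \<triangleright> Lam B ?Tf) \<bullet> (?TK \<triangleright> (v0 Y \<triangleleft> ?Tf)) \<bullet> Alpha B ?Tf ?TK ?TK
        \<bullet> (?vKK \<triangleleft> ?Tf) \<bullet> (?kK \<triangleleft> ?Tf)) \<bullet> ?vKf"
    using v_natural[of X Y Y "Id2 B f" "k Y Y (K Y)"] cells by simp
  also have "\<dots> = ?vKf"
    using K_unit_law[of Y ?Tf] cells by (simp del: vcomp_assoc)
  finally show ?thesis .
qed

text \<open>The right-hand side of (W3), transported: naturality of \<open>v\<close> twice, then the unit law for
  \<open>f\<close> inside \<open>T\<close>.\<close>
lemma W3_transport_rhs:
  assumes X: "X \<in> Ob B" and Y: "Y \<in> Ob B" and f: "f \<in> Arr1 B" "Src B f = X" "Trg B f = D Y"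
  shows "(T Y Y (K Y) \<triangleright> (T2 X Y (Lam B f) \<bullet> T2 X Y (v0 Y \<triangleleft> f))) \<bullet> W3_transport X Y f
    = v X Y Y (K Y) f"
proof -
  let ?TK = "T Y Y (K Y)" and ?one = "Id1 B (D Y)"
  let ?vKK = "v Y Y Y (K Y) (K Y)" and ?kK = "T2 Y Y (k Y Y (K Y))" and ?vKf = "v X Y Y (K Y) f"
  let ?rest = "T2 X Y (Alpha B f ?TK ?TK) \<bullet> T2 X Y (?vKK \<triangleleft> f) \<bullet> T2 X Y (?kK \<triangleleft> f)"
  note cells = X Y f
  have "(?TK \<triangleright> (T2 X Y (Lam B f) \<bullet> T2 X Y (v0 Y \<triangleleft> f))) \<bullet> W3_transport X Y f
      = (?TK \<triangleright> T2 X Y (Lam B f)) \<bullet> ((?TK \<triangleright> T2 X Y (v0 Y \<triangleleft> f)) \<bullet> v X Y Y (K Y) (?TK \<cdot> f)) \<bullet> ?rest"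
    using cells by (simp add: W3_transport_def whisker_left_vcomp)
  also have "\<dots> = (?TK \<triangleright> T2 X Y (Lam B f))
        \<bullet> (v X Y Y (K Y) (?one \<cdot> f) \<bullet> T2 X Y (?TK \<triangleright> (v0 Y \<triangleleft> f))) \<bullet> ?rest"
    using v_natural[of X Y Y "v0 Y \<triangleleft> f" "Id2 B (K Y)"] cells by (simp del: vcomp_assoc)
  also have "\<dots> = ((?TK \<triangleright> T2 X Y (Lam B f)) \<bullet> v X Y Y (K Y) (?one \<cdot> f))
        \<bullet> T2 X Y (?TK \<triangleright> (v0 Y \<triangleleft> f)) \<bullet> ?rest"
    using cells by simp
  also have "\<dots> = (?vKf \<bullet> T2 X Y (?TK \<triangleright> Lam B f)) \<bullet> T2 X Y (?TK \<triangleright> (v0 Y \<triangleleft> f)) \<bullet> ?rest"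
    using v_natural[of X Y Y "Lam B f" "Id2 B (K Y)"] cells by (simp del: vcomp_assoc)
  also have "\<dots> = ?vKf \<bullet> T2 X Y ((?TK \<triangleright> Lam B f) \<bullet> (?TK \<triangleright> (v0 Y \<triangleleft> f)) \<bullet> Alpha B f ?TK ?TK
        \<bullet> (?vKK \<triangleleft> f) \<bullet> (?kK \<triangleleft> f))"
    using cells by (simp add: T2_vcomp)
  also have "\<dots> = ?vKf"
    using K_unit_law[of Y f] cells by simp
  finally show ?thesis .
qed

text \<open>(W3) holds: the transported sides agree, the transport is invertible, and whiskering with
  \<open>TK \<cong> 1\<close> (via \<open>v\<^sub>0\<close>) is faithful.\<close>
lemma W3_at:
  assumes X: "X \<in> Ob B" and Y: "Y \<in> Ob B" and f: "f \<in> Arr1 B" "Src B f = X" "Trg B f = D Y"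
  shows "Lam B (T X Y f) \<bullet> (v0 Y \<triangleleft> T X Y f) \<bullet> v X Y Y (K Y) f
    = T2 X Y (Lam B f) \<bullet> T2 X Y (v0 Y \<triangleleft> f)"  (is "?A = ?A'")
proof -
  note cells = X Y f
  have "(T Y Y (K Y) \<triangleright> ?A) \<bullet> W3_transport X Y f = (T Y Y (K Y) \<triangleright> ?A') \<bullet> W3_transport X Y f"
    using W3_transport_lhs[OF cells] W3_transport_rhs[OF cells] by simp
  then have "T Y Y (K Y) \<triangleright> ?A = T Y Y (K Y) \<triangleright> ?A'"
    by (rule invertible_cancel_right) (use cells in \<open>simp_all add: W3_transport_def\<close>)
  then show ?thesis
    by (rule whisker_faithful[where \<epsilon>="v0 Y"]) (use cells in simp_all)
qed

text \<open>(W5) holds: by (W3) for \<open>K\<close>, then naturality of \<open>\<lambda>\<close>, interchange, (W2) for \<open>K\<close>,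
  naturality of \<open>\<rho>\<close> and (B5), one finds \<open>v\<^sub>0 \<bullet> T(\<lambda> \<bullet> (v\<^sub>0 \<triangleleft> K) \<bullet> k\<^sub>K) = v\<^sub>0\<close>; cancel the
  invertible \<open>v\<^sub>0\<close> and use faithfulness of \<open>T\<close>.\<close>
lemma W5_at:
  assumes X: "X \<in> Ob B"
  shows "Lam B (K X) \<bullet> (v0 X \<triangleleft> K X) \<bullet> k X X (K X) = Id2 B (K X)"  (is "?L = _")
proof -
  let ?TK = "T X X (K X)" and ?one = "Id1 B (D X)"
  let ?vKK = "v X X X (K X) (K X)" and ?kK = "T2 X X (k X X (K X))"
  have "v0 X \<bullet> T2 X X ?L = v0 X \<bullet> (T2 X X (Lam B (K X)) \<bullet> T2 X X (v0 X \<triangleleft> K X)) \<bullet> ?kK"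
    using X by (simp add: T2_vcomp)
  also have "\<dots> = v0 X \<bullet> (Lam B ?TK \<bullet> (v0 X \<triangleleft> ?TK) \<bullet> ?vKK) \<bullet> ?kK"
    using W3_at[of X X "K X"] X by (simp del: vcomp_assoc)
  also have "\<dots> = (v0 X \<bullet> Lam B ?TK) \<bullet> (v0 X \<triangleleft> ?TK) \<bullet> ?vKK \<bullet> ?kK"
    using X by simp
  also have "\<dots> = (Lam B ?one \<bullet> (?one \<triangleright> v0 X)) \<bullet> (v0 X \<triangleleft> ?TK) \<bullet> ?vKK \<bullet> ?kK"
    using lam_natural[of "v0 X"] X by (simp del: vcomp_assoc)
  also have "\<dots> = Lam B ?one \<bullet> ((?one \<triangleright> v0 X) \<bullet> (v0 X \<triangleleft> ?TK)) \<bullet> ?vKK \<bullet> ?kK"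
    using X by simp
  also have "\<dots> = Lam B ?one \<bullet> ((v0 X \<triangleleft> ?one) \<bullet> (?TK \<triangleright> v0 X)) \<bullet> ?vKK \<bullet> ?kK"
    using whisker_exchange[of "v0 X" "v0 X"] X by (simp del: vcomp_assoc)
  also have "\<dots> = Lam B ?one \<bullet> (v0 X \<triangleleft> ?one) \<bullet> Rho B ?TK"
    using W2_at[of X X "K X"] X by simp
  also have "\<dots> = (Lam B ?one \<bullet> Rho B ?one) \<bullet> v0 X"
    using rho_natural[of "v0 X"] X by simp
  also have "\<dots> = v0 X \<bullet> T2 X X (Id2 B (K X))"
    using B5[of "D X"] X by (simp del: vcomp_assoc)
  finally have "v0 X \<bullet> T2 X X ?L = v0 X \<bullet> T2 X X (Id2 B (K X))" .
  then have "T2 X X ?L = T2 X X (Id2 B (K X))"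
    by (rule invertible_cancel_left) (use X in simp_all)
  then show ?thesis
    by (rule T_faithful) (use X in simp_all)
qed

end

theorem mainTheorem1:
  fixes B :: "('o,'a,'c) bicat_data" and W :: "('o,'a,'c) warp_data"
  assumes "bicategory B"
    and "warping_data B W"
    and "warping_invertible B W"
    and "W1 B W"
    and "W2 B W"
  shows "W3 B W \<and> W4 B W \<and> W5 B W \<and> warping B W"
proof -
  interpret warping_W12 B W
    by unfold_locales (fact assms)+
  have "W3 B W"
    unfolding W3_def wl_def hom1_def by (auto intro!: W3_at)
  moreover have "W4 B W"
    unfolding W4_def wl_def wr_def hom1_def by (auto intro!: W4_at)
  moreover have "W5 B W"
    unfolding W5_def wl_def by (auto intro!: W5_at)
  ultimately show ?thesis
    using assms unfolding warping_def skew_warping_def by blast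
qed

end
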